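(* Let $G=(X,\Sigma,\longrightarrow,X_0)$ and $R=(Z,\Sigma,\longrightarrow,Z_0)$ be deterministic automata. If $\Phi$ is a $\Sigma_{ucr}$-simulation from $G$ to $R$, then $\Phi$ is uniform w.r.t. $\Sigma_r$.
   Context: An automaton is a 4-tuple $A=(Q,\Sigma,\longrightarrow,Q_0)$ with state set $Q$, finite event set $\Sigma$, ${\longrightarrow}\subseteq Q\times\Sigma\times Q$ and $\emptyset\neq Q_0\subseteq Q$; write $q\xrightarrow{\sigma}q'$ for $(q,\sigma,q')\in{\longrightarrow}$, $q\xrightarrow{\sigma}$ if some such $q'$ exists, extended to strings. It is deterministic if $|Q_0|=1$ and each state has at most one $\sigma$-successor for each $\sigma$. A state $q$ is $s$-reachable ($s\in\Sigma^*$) if $q_0\xrightarrow{s}q$ for some initial $q_0$. Events are partitioned into uncontrollable $\Sigma_{uc}$ and controllable $\Sigma_c$; $\Sigma_r\subseteq\Sigma$ is a fixed set of required events. $\Phi\subseteq X\times Z$ is a $\Sigma_{ucr}$-simulation from $G$ to $R$ if (initial state) every $x_0\in X_0$ has $z_0\in Z_0$ with $(x_0,z_0)\in\Phi$; ($\Sigma_{uc}$-forward) for $(x,z)\in\Phi$, $\sigma\in\Sigma_{uc}$, $x\xrightarrow{\sigma}x'$ there is $z'$ with $z\xrightarrow{\sigma}z'$, $(x',z')\in\Phi$; ($\Sigma_r$-backward) for $(x,z)\in\Phi$, $\sigma\in\Sigma_r$, $z\xrightarrow{\sigma}z'$ there is $x'$ with $x\xrightarrow{\sigma}x'$, $(x',z')\in\Phi$.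 Such $\Phi$ is uniform w.r.t. $\Sigma_r$ if for any $(x_1,z_1),(x_2,z_2)\in\Phi$ such that, for some $s\in\Sigma^*$, $x_1,x_2$ are $s$-reachable in $G$ and $z_1,z_2$ are $s$-reachable in $R$: for all $\sigma\in\Sigma_r$ and $x_2'$, if $z_1\xrightarrow{\sigma}$ and $x_2\xrightarrow{\sigma}x_2'$ then there is $z_2'$ with $z_2\xrightarrow{\sigma}z_2'$ and $(x_2',z_2')\in\Phi$. *)

theory Defs
  imports Main
begin

record ('s, 'e) automaton =
  states :: "'s set"
  events :: "'e set"
  trans :: "('s \<times> 'e \<times> 's) set"
  init :: "'s set"

definition is_automaton :: "('s, 'e) automaton \<Rightarrow> bool" where
  "is_automaton A \<longleftrightarrow> finite (events A) \<and>
     trans A \<subseteq> states A \<times> events A \<times> states A \<and>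
     init A \<noteq> {} \<and> init A \<subseteq> states A"

definition deterministic :: "('s, 'e) automaton \<Rightarrow> bool" where
  "deterministic A \<longleftrightarrow> card (init A) = 1 \<and>
     (\<forall>q \<sigma> q1 q2. (q, \<sigma>, q1) \<in> trans A \<and> (q, \<sigma>, q2) \<in> trans A \<longrightarrow> q1 = q2)"

fun steps :: "('s, 'e) automaton \<Rightarrow> 's \<Rightarrow> 'e list \<Rightarrow> 's \<Rightarrow> bool" where
  "steps A q [] q' \<longleftrightarrow> q' = q"
| "steps A q (\<sigma> # s) q' \<longleftrightarrow> (\<exists>q''. (q, \<sigma>, q'') \<in> trans A \<and> steps A q'' s q')"

definition reachable_by :: "('s, 'e) automaton \<Rightarrow> 'e list \<Rightarrow> 's \<Rightarrow> bool" where
  "reachable_by A s q \<longleftrightarrow> (\<exists>q0 \<in> init A. steps A q0 s q)"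

definition enabled :: "('s, 'e) automaton \<Rightarrow> 's \<Rightarrow> 'e \<Rightarrow> bool" where
  "enabled A q \<sigma> \<longleftrightarrow> (\<exists>q'. (q, \<sigma>, q') \<in> trans A)"

text \<open>Sigma_ucr-simulation from G to R (Uc: uncontrollable events, Sr: required events).\<close>
definition ucr_simulation ::
  "'e set \<Rightarrow> 'e set \<Rightarrow> ('x \<times> 'z) set \<Rightarrow> ('x, 'e) automaton \<Rightarrow> ('z, 'e) automaton \<Rightarrow> bool" where
  "ucr_simulation Uc Sr Phi G R \<longleftrightarrow>
     Phi \<subseteq> states G \<times> states R \<and>
     (\<forall>x0 \<in> init G. \<exists>z0 \<in> init R. (x0, z0) \<in> Phi) \<and>
     (\<forall>x z \<sigma> x'. (x, z) \<in> Phi \<and> \<sigma> \<in> Uc \<and> (x, \<sigma>, x') \<in> trans G \<longrightarrow>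
        (\<exists>z'. (z, \<sigma>, z') \<in> trans R \<and> (x', z') \<in> Phi)) \<and>
     (\<forall>x z \<sigma> z'. (x, z) \<in> Phi \<and> \<sigma> \<in> Sr \<and> (z, \<sigma>, z') \<in> trans R \<longrightarrow>
        (\<exists>x'. (x, \<sigma>, x') \<in> trans G \<and> (x', z') \<in> Phi))"

definition uniform :: "'e set \<Rightarrow> ('x \<times> 'z) set \<Rightarrow> ('x, 'e) automaton \<Rightarrow> ('z, 'e) automaton \<Rightarrow> bool" where
  "uniform Sr Phi G R \<longleftrightarrow>
     (\<forall>x1 z1 x2 z2 s. (x1, z1) \<in> Phi \<and> (x2, z2) \<in> Phi \<and>
        reachable_by G s x1 \<and> reachable_by G s x2 \<and>
        reachable_by R s z1 \<and> reachable_by R s z2 \<longrightarrow>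
        (\<forall>\<sigma> \<in> Sr. \<forall>x2'. enabled R z1 \<sigma> \<and> (x2, \<sigma>, x2') \<in> trans G \<longrightarrow>
           (\<exists>z2'. (z2, \<sigma>, z2') \<in> trans R \<and> (x2', z2') \<in> Phi)))"

end

theory Submission
  imports Defs
begin

text \<open>In a deterministic automaton all states reached by the same string coincide. So the
  two related pairs in the definition of uniformity are one and the same pair (x, z);
  an enabled required event at z lifts by \<Sigma>r-backward simulation to a transition of G
  into a related state, and determinism of G identifies that state with the given
  successor x2'.\<close>

lemma deterministic_trans_unique:
  assumes "deterministic A" "(q, \<sigma>, q1) \<in> trans A" "(q, \<sigma>, q2) \<in> trans A"
  shows "q1 = q2"
  using assms unfolding deterministic_def by blast

lemma deterministic_steps_unique:
  assumes "deterministic A" "steps A q s q1" "steps A q s q2"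
  shows "q1 = q2"
  using assms(2,3)
proof (induction s arbitrary: q)
  case Nil
  then show ?case by simp
next
  case (Cons \<sigma> s)
  then obtain p1 p2 where "(q, \<sigma>, p1) \<in> trans A" "steps A p1 s q1"
    and "(q, \<sigma>, p2) \<in> trans A" "steps A p2 s q2"
    by auto
  moreover from calculation have "p1 = p2"
    using assms(1) by (blast intro: deterministic_trans_unique)
  ultimately show ?case using Cons.IH by blast
qed

lemma deterministic_reachable_by_unique:
  assumes "deterministic A" "reachable_by A s q1" "reachable_by A s q2"
  shows "q1 = q2"
proof -
  obtain q0 where "init A = {q0}"
    using assms(1) unfolding deterministic_def by (auto simp: card_1_singleton_iff)
  with assms show ?thesis
    unfolding reachable_by_def by (auto intro: deterministic_steps_unique)
qed

lemma uniform_if_deterministic_backward: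
  assumes det_G: "deterministic G" and det_R: "deterministic R"
    and backward: "\<And>x z \<sigma> z'. (x, z) \<in> Phi \<Longrightarrow> \<sigma> \<in> Sr \<Longrightarrow> (z, \<sigma>, z') \<in> trans R \<Longrightarrow>
      \<exists>x'. (x, \<sigma>, x') \<in> trans G \<and> (x', z') \<in> Phi"
  shows "uniform Sr Phi G R"
  unfolding uniform_def
proof (intro allI impI ballI)
  fix x1 z1 x2 z2 s \<sigma> x2'
  assume related: "(x1, z1) \<in> Phi \<and> (x2, z2) \<in> Phi \<and>
      reachable_by G s x1 \<and> reachable_by G s x2 \<and>
      reachable_by R s z1 \<and> reachable_by R s z2"
    and required: "\<sigma> \<in> Sr"
    and step: "enabled R z1 \<sigma> \<and> (x2, \<sigma>, x2') \<in> trans G"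
  have "z1 = z2"
    using related det_R by (blast intro: deterministic_reachable_by_unique)
  then obtain z2' where z2': "(z2, \<sigma>, z2') \<in> trans R"
    using step unfolding enabled_def by blast
  then obtain x' where x': "(x2, \<sigma>, x') \<in> trans G" "(x', z2') \<in> Phi"
    using backward related required by blast
  have "x' = x2'"
    using x'(1) step det_G by (blast intro: deterministic_trans_unique)
  with z2' x'(2) show "\<exists>z2'. (z2, \<sigma>, z2') \<in> trans R \<and> (x2', z2') \<in> Phi"
    by blast
qed

theorem lemma6:
  fixes G :: "('x, 'e) automaton" and R :: "('z, 'e) automaton"
    and Uc Sc Sr :: "'e set" and Phi :: "('x \<times> 'z) set"
  assumes "is_automaton G" and "is_automaton R"
    and "events G = events R"
    and "Uc \<inter> Sc = {}" and "Uc \<union> Sc = events G" and "Sr \<subseteq> events G"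
    and "deterministic G" and "deterministic R"
    and "ucr_simulation Uc Sr Phi G R"
  shows "uniform Sr Phi G R"
proof (rule uniform_if_deterministic_backward)
  show "deterministic G" "deterministic R" by fact+
  show "\<exists>x'. (x, \<sigma>, x') \<in> trans G \<and> (x', z') \<in> Phi"
    if "(x, z) \<in> Phi" "\<sigma> \<in> Sr" "(z, \<sigma>, z') \<in> trans R" for x z \<sigma> z'
    using \<open>ucr_simulation Uc Sr Phi G R\<close> that unfolding ucr_simulation_def by blast
qed

end
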